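(* Let $\langle B,\wedge,{}'\rangle$ be an algebra with $\wedge$ binary and ${}'$ unary satisfying $x\wedge y\approx y\wedge x$, $x\wedge(y\wedge z)\approx(x\wedge y)\wedge z$, $x''\approx x$, and $x'\approx (x\wedge y)'\wedge(x\wedge y')'$. Then for all $x,y,z\in B$, writing $0=z\wedge z'$, we have $0'\wedge[(x\wedge y)\wedge(x\wedge y)]'=[y\wedge(x\wedge y)]'$.
   Context: In such an algebra the element $z\wedge z'$ does not depend on $z$; the paper denotes it $0$. *)

theory Defs
  imports Main
begin

end

theory Submission
  imports Defs
begin

(* These are Huntington's axioms for Boolean algebras, written with meet instead of join.
   Expanding x and y by the axiom shows x \<and> (y' \<and> x)' = y \<and> (x' \<and> y)'; meeting both sides
   with (x \<and> y)' and contracting with the axiom again gives x \<and> x' = y \<and> y' =: 0.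
   The axiom with y = x' then reads x' = 0' \<and> (x \<and> x)', which is the left-hand side of the
   theorem for the element x \<and> y. What remains is idempotence of \<and>, obtained by first
   showing x \<and> 0 = 0 and x \<and> x = x \<and> 0'. *)

locale huntington_algebra = abel_semigroup meet
  for meet :: "'a \<Rightarrow> 'a \<Rightarrow> 'a" (infixl \<open>\<sqinter>\<close> 70) +
  fixes c :: "'a \<Rightarrow> 'a"
  assumes compl_compl [simp]: "c (c x) = x"
    and huntington: "c x = c (x \<sqinter> y) \<sqinter> c (x \<sqinter> c y)"
begin

lemma huntington_dual: "x = c (c x \<sqinter> y) \<sqinter> c (c x \<sqinter> c y)"
  using huntington [of "c x" y] by simp

lemma huntington_swap: "x \<sqinter> c (c y \<sqinter> x) = y \<sqinter> c (c x \<sqinter> y)"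
proof -
  have "x \<sqinter> c (c y \<sqinter> x) = c (c x \<sqinter> y) \<sqinter> c (c x \<sqinter> c y) \<sqinter> c (c y \<sqinter> x)"
    using huntington_dual [of x y] by (rule arg_cong [where f = "\<lambda>u. u \<sqinter> c (c y \<sqinter> x)"])
  also have "\<dots> = c (c x \<sqinter> y) \<sqinter> (c (c y \<sqinter> x) \<sqinter> c (c y \<sqinter> c x))"
    by (simp only: ac_simps)
  also have "\<dots> = y \<sqinter> c (c x \<sqinter> y)"
    by (subst huntington_dual [of y x, symmetric]) (rule commute)
  finally show ?thesis .
qed

lemma meet_compl_const: "x \<sqinter> c x = y \<sqinter> c y"
proof -
  have "x \<sqinter> c x = c (x \<sqinter> y) \<sqinter> (x \<sqinter> c (c y \<sqinter> x))"
    using huntington [of x y] by (simp add: ac_simps)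
  also have "\<dots> = c (y \<sqinter> x) \<sqinter> (y \<sqinter> c (c x \<sqinter> y))"
    using huntington_swap [of x y] by (simp add: ac_simps)
  also have "\<dots> = y \<sqinter> c y"
    using huntington [of y x] by (simp add: ac_simps)
  finally show ?thesis .
qed

definition zero :: 'a (\<open>\<zero>\<close>)
  where "\<zero> = undefined \<sqinter> c undefined"

lemma meet_compl [simp]: "x \<sqinter> c x = \<zero>"
  unfolding zero_def by (rule meet_compl_const)

lemma compl_eq_compl_zero_meet: "c x = c \<zero> \<sqinter> c (x \<sqinter> x)"
  using huntington [of x "c x"] by simp

lemma meet_zero: "x \<sqinter> \<zero> = \<zero>"
proof -
  have "x \<sqinter> \<zero> = x \<sqinter> (x \<sqinter> (c \<zero> \<sqinter> c (x \<sqinter> x)))"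
    by (simp flip: compl_eq_compl_zero_meet)
  also have "\<dots> = (x \<sqinter> x) \<sqinter> c (x \<sqinter> x) \<sqinter> c \<zero>"
    by (simp only: ac_simps)
  also have "\<dots> = \<zero>"
    by simp
  finally show ?thesis .
qed

lemma meet_self: "x \<sqinter> x = x \<sqinter> c \<zero>"
proof -
  have "x \<sqinter> x = c (c (x \<sqinter> x) \<sqinter> c \<zero>) \<sqinter> c (c (x \<sqinter> x) \<sqinter> \<zero>)"
    by (rule huntington_dual [of "x \<sqinter> x" "c \<zero>", unfolded compl_compl])
  also have "\<dots> = c (c \<zero> \<sqinter> c (x \<sqinter> x)) \<sqinter> c \<zero>"
    by (metis meet_zero commute)
  also have "\<dots> = x \<sqinter> c \<zero>"
    by (simp flip: compl_eq_compl_zero_meet)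
  finally show ?thesis .
qed

lemma meet_idem [simp]: "x \<sqinter> x = x"
proof -
  have one_idem: "c \<zero> \<sqinter> c \<zero> = c \<zero>"
    using compl_eq_compl_zero_meet [of \<zero>, unfolded meet_zero] by (rule sym)
  have x_eq: "x = c \<zero> \<sqinter> c (c x \<sqinter> c \<zero>)"
    by (rule compl_eq_compl_zero_meet [of "c x", unfolded compl_compl meet_self])
  have "x \<sqinter> x = x \<sqinter> c \<zero>"
    by (rule meet_self)
  also have "\<dots> = c \<zero> \<sqinter> c (c x \<sqinter> c \<zero>) \<sqinter> c \<zero>"
    using x_eq by (rule arg_cong [where f = "\<lambda>u. u \<sqinter> c \<zero>"])
  also have "\<dots> = c \<zero> \<sqinter> c \<zero> \<sqinter> c (c x \<sqinter> c \<zero>)"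
    by (simp only: ac_simps)
  also have "\<dots> = x"
    by (simp only: one_idem flip: x_eq)
  finally show ?thesis .
qed

end

theorem lemma2p8:
  fixes m :: "'b \<Rightarrow> 'b \<Rightarrow> 'b" and c :: "'b \<Rightarrow> 'b"
  assumes comm: "\<And>x y. m x y = m y x"
    and assoc: "\<And>x y z. m x (m y z) = m (m x y) z"
    and invol: "\<And>x. c (c x) = x"
    and ax4: "\<And>x y. c x = m (c (m x y)) (c (m x (c y)))"
  shows "m (c (m z (c z))) (c (m (m x y) (m x y))) = c (m y (m x y))"
proof -
  interpret B: huntington_algebra m c
    by unfold_locales (fact assoc [symmetric] comm invol ax4)+
  have "m (c (m z (c z))) (c (m (m x y) (m x y))) = c (m x y)"
    by (simp only: B.meet_compl B.compl_eq_compl_zero_meet [symmetric])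
  also have "\<dots> = c (m y (m x y))"
    by (simp only: B.left_commute [of y x] B.meet_idem)
  finally show ?thesis .
qed

end
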